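(* Let $g\geqslant1$ be odd. An element $u\in\mathbb{C}[\alpha,\gamma]$ is a unit modulo $J_g^-$ if and only if $\mathrm{ev}^\pm_j(u)\neq0$ for both signs and all $j=1,\ldots,(g-1)/2$, where $\mathrm{ev}^\pm_j(f)=f\big(\pm4(g-2j),\,0\big)$.
   Context: $\zeta_k^-\in\mathbb{C}[\alpha,\gamma]$: $\zeta^-_i=0$ for $i<0$, $\zeta^-_0=1$, $\zeta^-_{k+1}=\alpha\zeta^-_k-16k^2\zeta^-_{k-1}+2k(k-1)\gamma\zeta^-_{k-2}$ for $k$ odd and $\zeta^-_{k+1}=\alpha\zeta^-_k+2k(k-1)\gamma\zeta^-_{k-2}$ for $k$ even; $J^-_k=(\zeta^-_k,\zeta^-_{k+1},\zeta^-_{k+2})$. (These are the specializations at $\beta=-8$ of $\zeta_{k+1}=\alpha\zeta_k+k^2(\beta+(-1)^k8)\zeta_{k-1}+2k(k-1)\gamma\zeta_{k-2}$.) "Unit modulo $J_g^-$" means the image in $\mathbb{C}[\alpha,\gamma]/J_g^-$ is invertible; the maps $\mathrm{ev}^\pm_j$ vanish on $J_g^-$. *)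

theory Defs
  imports "HOL-Computational_Algebra.Polynomial"
begin

text \<open>C[alpha,gamma] is represented as complex poly poly: the outer variable is alpha,
  the coefficients are polynomials in gamma.\<close>

type_synonym bipoly = "complex poly poly"

definition var_alpha :: bipoly where "var_alpha = [:0, 1:]"
definition var_gamma :: bipoly where "var_gamma = [:[:0, 1:]:]"

definition eval2 :: "bipoly \<Rightarrow> complex \<Rightarrow> complex \<Rightarrow> complex" where
  "eval2 f a c = poly (map_poly (\<lambda>q. poly q c) f) a"

text \<open>zeta^-_k, with zeta^-_i = 0 for i<0, zeta^-_0 = 1 and
  zeta_{k+1} = alpha zeta_k - [k odd] 16 k^2 zeta_{k-1} + 2k(k-1) gamma zeta_{k-2}.
  For k = 0,1 the terms with negative index have zero coefficient or vanish.\<close>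
fun zeta_minus :: "nat \<Rightarrow> bipoly" where
  "zeta_minus 0 = 1"
| "zeta_minus (Suc 0) = var_alpha * zeta_minus 0"
| "zeta_minus (Suc (Suc 0)) = var_alpha * zeta_minus 1 - of_nat (16 * 1^2) * zeta_minus 0"
| "zeta_minus (Suc (Suc (Suc n))) =
     var_alpha * zeta_minus (Suc (Suc n))
     - (if odd (Suc (Suc n)) then of_nat (16 * (Suc (Suc n))^2) * zeta_minus (Suc n) else 0)
     + of_nat (2 * (Suc (Suc n)) * (Suc n)) * var_gamma * zeta_minus n"

definition unit_mod_J :: "nat \<Rightarrow> bipoly \<Rightarrow> bool" where
  "unit_mod_J g u \<longleftrightarrow> (\<exists>v a b c. u * v = 1 + a * zeta_minus g + b * zeta_minus (g + 1)
                                         + c * zeta_minus (g + 2))"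

definition ev :: "nat \<Rightarrow> complex \<Rightarrow> nat \<Rightarrow> bipoly \<Rightarrow> complex" where
  "ev g s j f = eval2 f (s * 4 * of_int (int g - 2 * int j)) 0"

end

theory Submission
  imports Defs "HOL-Computational_Algebra.Computational_Algebra" "HOL-Computational_Algebra.Field_as_Ring"
begin

text \<open>Write g = 2m + 1. Setting \<gamma> = 0 turns the recursion into \<zeta>_{2m+1} = \<alpha> \<zeta>_{2m} and
  \<zeta>_{2m+2} = (\<alpha>^2 - 16(2m+1)^2) \<zeta>_{2m}, so modulo \<gamma> the ideal J_g becomes the principal
  ideal of P_m = \<Prod>_{i<m} (\<alpha>^2 - 16(2i+1)^2) (odd_square_poly m), whose roots are exactly
  the points \<plusminus>4(g - 2j), 1 \<le> j \<le> m. On the other hand \<gamma>^2 J_g \<subseteq> J_{g+2}, hence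
  \<gamma>^(g-1) \<in> J_g, and 1 + \<gamma> w is invertible modulo \<gamma>^(g-1). So u is a unit modulo J_g iff
  u(\<alpha>, 0) is coprime to P_m, i.e. vanishes at none of its roots.\<close>

definition eval_gamma :: "complex \<Rightarrow> bipoly \<Rightarrow> complex poly" where
  "eval_gamma c f = map_poly (\<lambda>q. poly q c) f"

lemma coeff_eval_gamma [simp]: "coeff (eval_gamma c f) n = poly (coeff f n) c"
  by (simp add: eval_gamma_def coeff_map_poly)

lemma eval_gamma_add [simp]: "eval_gamma c (f + h) = eval_gamma c f + eval_gamma c h"
  by (intro poly_eqI) simp

lemma eval_gamma_diff [simp]: "eval_gamma c (f - h) = eval_gamma c f - eval_gamma c h"
  by (intro poly_eqI) simp

lemma eval_gamma_mult [simp]: "eval_gamma c (f * h) = eval_gamma c f * eval_gamma c h"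
  by (intro poly_eqI) (simp add: coeff_mult poly_sum)

lemma eval_gamma_one [simp]: "eval_gamma c 1 = 1"
  by (simp add: eval_gamma_def map_poly_1)

lemma eval_gamma_of_nat [simp]: "eval_gamma c (of_nat n) = of_nat n"
  by (intro poly_eqI) (simp add: of_nat_poly coeff_pCons split: nat.splits)

lemma eval_gamma_numeral [simp]: "eval_gamma c (numeral n) = numeral n"
  using eval_gamma_of_nat[of c "numeral n"] by simp

lemma eval_gamma_power [simp]: "eval_gamma c (f ^ n) = eval_gamma c f ^ n"
  by (induction n) simp_all

lemma eval_gamma_var_alpha [simp]: "eval_gamma c var_alpha = [:0, 1:]"
  by (intro poly_eqI) (simp add: var_alpha_def coeff_pCons split: nat.splits)

lemma eval_gamma_var_gamma [simp]: "eval_gamma c var_gamma = [:c:]"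
  by (intro poly_eqI) (simp add: var_gamma_def coeff_pCons split: nat.splits)

lemma eval_gamma_map_poly_const [simp]: "eval_gamma c (map_poly (\<lambda>a. [:a:]) p) = p"
  by (intro poly_eqI) (simp add: coeff_map_poly)

lemma poly_eval_gamma: "poly (eval_gamma c f) a = eval2 f a c"
  by (simp add: eval_gamma_def eval2_def)

lemma var_gamma_dvd_if_eval_gamma_0:
  assumes "eval_gamma 0 f = 0"
  shows "var_gamma dvd f"
proof -
  have "[:0, 1:] dvd coeff f n" for n
    using arg_cong[OF assms, of "\<lambda>p. coeff p n"] by (simp add: poly_eq_0_iff_dvd)
  then show ?thesis
    by (simp add: var_gamma_def const_poly_dvd_iff)
qed

text \<open>At k = 1 (odd) and k = 0 (even) the truncated indices k - 1, k - 2 are harmless: their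
  coefficients vanish.\<close>

lemma zeta_minus_Suc_odd:
  assumes "odd k"
  shows "zeta_minus (Suc k) = var_alpha * zeta_minus k - of_nat (16 * k^2) * zeta_minus (k - 1)
           + of_nat (2 * k * (k - 1)) * var_gamma * zeta_minus (k - 2)"
  using assms by (cases k rule: zeta_minus.cases) auto

lemma zeta_minus_Suc_even:
  assumes "even k"
  shows "zeta_minus (Suc k) = var_alpha * zeta_minus k
           + of_nat (2 * k * (k - 1)) * var_gamma * zeta_minus (k - 2)"
  using assms by (cases k rule: zeta_minus.cases) auto

declare zeta_minus.simps(4) [simp del]

definition odd_square_poly :: "nat \<Rightarrow> complex poly" where
  "odd_square_poly m = (\<Prod>i<m. [:0, 1:]^2 - of_nat (16 * (2 * i + 1)^2))"

lemma eval_gamma_0_zeta_minus_Suc: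
  "eval_gamma 0 (zeta_minus (Suc k)) = [:0, 1:] * eval_gamma 0 (zeta_minus k)
     - (if odd k then of_nat (16 * k^2) * eval_gamma 0 (zeta_minus (k - 1)) else 0)"
  by (cases "even k") (simp_all add: zeta_minus_Suc_odd zeta_minus_Suc_even)

lemma eval_gamma_0_zeta_minus:
  "eval_gamma 0 (zeta_minus (2 * m)) = odd_square_poly m \<and>
   eval_gamma 0 (zeta_minus (2 * m + 1)) = [:0, 1:] * odd_square_poly m"
proof (induction m)
  case 0
  show ?case by (simp add: odd_square_poly_def)
next
  case (Suc m)
  have "eval_gamma 0 (zeta_minus (2 * Suc m)) = odd_square_poly (Suc m)"
    using Suc eval_gamma_0_zeta_minus_Suc[of "2 * m + 1"]
    by (simp add: odd_square_poly_def algebra_simps power2_eq_square)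
  then show ?case
    using eval_gamma_0_zeta_minus_Suc[of "2 * Suc m"] by simp
qed

lemma poly_odd_square_poly_eq_0_iff:
  "poly (odd_square_poly m) r = 0 \<longleftrightarrow>
     (\<exists>i<m. r = of_nat (4 * (2 * i + 1)) \<or> r = - of_nat (4 * (2 * i + 1)))"
proof -
  have "(of_nat (16 * (2 * i + 1)^2) :: complex) = of_nat (4 * (2 * i + 1)) ^ 2" for i
    by (simp only: of_nat_power[symmetric] power_mult_distrib) simp
  then show ?thesis
    by (auto simp add: odd_square_poly_def poly_prod power2_eq_iff simp del: of_nat_mult of_nat_add)
qed

lemma coprime_iff_no_common_root:
  fixes p q :: "complex poly"
  shows "coprime p q \<longleftrightarrow> (\<forall>x. poly p x = 0 \<longrightarrow> poly q x \<noteq> 0)"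
proof
  assume "coprime p q"
  then show "\<forall>x. poly p x = 0 \<longrightarrow> poly q x \<noteq> 0"
    using coprime_poly_0 by blast
next
  assume no_common: "\<forall>x. poly p x = 0 \<longrightarrow> poly q x \<noteq> 0"
  show "coprime p q"
  proof (rule coprimeI)
    fix d assume d: "d dvd p" "d dvd q"
    have no_root: "\<not> (\<exists>x. poly d x = 0)"
      using d no_common by (auto elim!: dvdE)
    then have "constant (poly d)"
      using fundamental_theorem_of_algebra by blast
    moreover have "d \<noteq> 0"
      using no_root by auto
    ultimately show "is_unit d"
      by (simp add: is_unit_iff_degree constant_degree)
  qed
qed

definition J_minus :: "nat \<Rightarrow> bipoly set" where
  "J_minus g = {a * zeta_minus g + b * zeta_minus (g + 1) + c * zeta_minus (g + 2) | a b c. True}"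

lemma zeta_minus_in_J_minus:
  "zeta_minus g \<in> J_minus g" "zeta_minus (g + 1) \<in> J_minus g" "zeta_minus (g + 2) \<in> J_minus g"
  unfolding J_minus_def
  by (force intro: exI[of _ 1] exI[of _ 0])+

lemma J_minus_add:
  assumes "x \<in> J_minus g" and "y \<in> J_minus g"
  shows "x + y \<in> J_minus g"
proof -
  obtain a b c a' b' c' where
    "x = a * zeta_minus g + b * zeta_minus (g + 1) + c * zeta_minus (g + 2)"
    "y = a' * zeta_minus g + b' * zeta_minus (g + 1) + c' * zeta_minus (g + 2)"
    using assms unfolding J_minus_def by blast
  then have "x + y = (a + a') * zeta_minus g + (b + b') * zeta_minus (g + 1)
      + (c + c') * zeta_minus (g + 2)"
    by (simp add: algebra_simps)
  then show ?thesis unfolding J_minus_def by blast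
qed

lemma J_minus_mult_left:
  assumes "x \<in> J_minus g"
  shows "y * x \<in> J_minus g"
proof -
  obtain a b c where "x = a * zeta_minus g + b * zeta_minus (g + 1) + c * zeta_minus (g + 2)"
    using assms unfolding J_minus_def by blast
  then have "y * x = (y * a) * zeta_minus g + (y * b) * zeta_minus (g + 1)
      + (y * c) * zeta_minus (g + 2)"
    by (simp add: algebra_simps)
  then show ?thesis unfolding J_minus_def by blast
qed

lemma J_minus_mult_right: "x \<in> J_minus g \<Longrightarrow> x * y \<in> J_minus g"
  using J_minus_mult_left[of x g y] by (simp add: mult.commute)

lemma J_minus_diff: "x \<in> J_minus g \<Longrightarrow> y \<in> J_minus g \<Longrightarrow> x - y \<in> J_minus g"
  using J_minus_add[of x g "(- 1) * y"] J_minus_mult_left[of y g "- 1"] by simp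

lemma J_minus_cancel_of_nat:
  assumes "of_nat n * x \<in> J_minus g" and "n \<noteq> 0"
  shows "x \<in> J_minus g"
proof -
  have "[:[:inverse (of_nat n):]:] * (of_nat n * x) = x"
    using assms(2) by (simp add: of_nat_poly mult.assoc[symmetric] one_pCons[symmetric])
  then show ?thesis
    using J_minus_mult_left[OF assms(1)] by metis
qed

lemma unit_mod_J_iff: "unit_mod_J g u \<longleftrightarrow> (\<exists>v. u * v - 1 \<in> J_minus g)"
  unfolding unit_mod_J_def J_minus_def by (auto simp: algebra_simps)

text \<open>For odd g the index g + 3 is even, so the recursion producing \<zeta>_{g+4} has no \<zeta>_{g+2}
  term and isolates \<gamma> \<zeta>_{g+1}.\<close>

lemma gamma_mult_zeta_minus_in_J_minus:
  assumes "odd g"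
  shows "var_gamma * zeta_minus (g + 1) \<in> J_minus (g + 2)"
proof (rule J_minus_cancel_of_nat)
  have "even (g + 3)" using assms by simp
  moreover have "Suc (g + 3) = g + 2 + 2" "g + 3 = g + 2 + 1" "g + 3 - 2 = g + 1" by simp_all
  ultimately have step: "zeta_minus (g + 2 + 2) = var_alpha * zeta_minus (g + 2 + 1)
      + of_nat (2 * (g + 3) * (g + 2)) * var_gamma * zeta_minus (g + 1)"
    using zeta_minus_Suc_even[of "g + 3"] by (metis add_diff_cancel_right')
  have "of_nat (2 * (g + 3) * (g + 2)) * (var_gamma * zeta_minus (g + 1))
      = zeta_minus (g + 2 + 2) - var_alpha * zeta_minus (g + 2 + 1)"
    unfolding step by (simp add: algebra_simps)
  also have "\<dots> \<in> J_minus (g + 2)"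
    by (intro J_minus_diff J_minus_mult_left zeta_minus_in_J_minus)
  finally show "of_nat (2 * (g + 3) * (g + 2)) * (var_gamma * zeta_minus (g + 1)) \<in> J_minus (g + 2)" .
qed simp

lemma gamma_sq_mult_zeta_minus_in_J_minus:
  assumes "odd g"
  shows "var_gamma^2 * zeta_minus g \<in> J_minus (g + 2)"
proof (rule J_minus_cancel_of_nat)
  have "odd (g + 2)" using assms by simp
  moreover have "Suc (g + 2) = g + 2 + 1" "g + 2 - 1 = g + 1" "g + 2 - 2 = g" by simp_all
  ultimately have step: "zeta_minus (g + 2 + 1) = var_alpha * zeta_minus (g + 2)
      - of_nat (16 * (g + 2)^2) * zeta_minus (g + 1)
      + of_nat (2 * (g + 2) * (g + 1)) * var_gamma * zeta_minus g"
    using zeta_minus_Suc_odd[of "g + 2"] by metis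
  have "of_nat (2 * (g + 2) * (g + 1)) * (var_gamma^2 * zeta_minus g)
      = var_gamma * zeta_minus (g + 2 + 1) - (var_gamma * var_alpha) * zeta_minus (g + 2)
        + of_nat (16 * (g + 2)^2) * (var_gamma * zeta_minus (g + 1))"
    unfolding step by (simp add: algebra_simps power2_eq_square)
  also have "\<dots> \<in> J_minus (g + 2)"
    by (intro J_minus_add J_minus_diff J_minus_mult_left[OF zeta_minus_in_J_minus(1)]
        J_minus_mult_left[OF zeta_minus_in_J_minus(2)]
        J_minus_mult_left[OF gamma_mult_zeta_minus_in_J_minus[OF assms]])
  finally show "of_nat (2 * (g + 2) * (g + 1)) * (var_gamma^2 * zeta_minus g) \<in> J_minus (g + 2)" .
qed simp

lemma gamma_sq_mult_J_minus:
  assumes "odd g" and "x \<in> J_minus g"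
  shows "var_gamma^2 * x \<in> J_minus (g + 2)"
proof -
  obtain a b c where "x = a * zeta_minus g + b * zeta_minus (g + 1) + c * zeta_minus (g + 2)"
    using assms(2) unfolding J_minus_def by blast
  then have "var_gamma^2 * x = a * (var_gamma^2 * zeta_minus g)
      + (b * var_gamma) * (var_gamma * zeta_minus (g + 1)) + (c * var_gamma^2) * zeta_minus (g + 2)"
    by (simp add: algebra_simps power2_eq_square)
  also have "\<dots> \<in> J_minus (g + 2)"
    using gamma_sq_mult_zeta_minus_in_J_minus[OF assms(1)]
      gamma_mult_zeta_minus_in_J_minus[OF assms(1)] zeta_minus_in_J_minus(1)[of "g + 2"]
    by (intro J_minus_add) (rule J_minus_mult_left, assumption)+
  finally show ?thesis .
qed

lemma gamma_power_in_J_minus: "var_gamma^(2 * m) \<in> J_minus (2 * m + 1)"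
proof (induction m)
  case 0
  have "of_nat 16 * 1 = var_alpha * zeta_minus 1 - zeta_minus (1 + 1)"
    by (simp add: numeral_2_eq_2)
  also have "\<dots> \<in> J_minus 1"
    by (intro J_minus_diff J_minus_mult_left zeta_minus_in_J_minus)
  finally have "of_nat 16 * 1 \<in> J_minus 1" .
  from J_minus_cancel_of_nat[OF this] show ?case by simp
next
  case (Suc m)
  have "var_gamma^(2 * Suc m) = var_gamma^2 * var_gamma^(2 * m)"
    by (simp only: mult_Suc_right power_add)
  also have "\<dots> \<in> J_minus (2 * m + 1 + 2)"
    using Suc.IH by (intro gamma_sq_mult_J_minus) simp_all
  also have "2 * m + 1 + 2 = 2 * Suc m + 1"
    by simp
  finally show ?case .
qed

lemma odd_square_poly_Suc:
  "odd_square_poly (Suc m) = ([:0, 1:]^2 - of_nat (16 * (2 * m + 1)^2)) * odd_square_poly m"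
  by (simp add: odd_square_poly_def)

lemma odd_square_poly_dvd_eval_gamma_0:
  assumes "x \<in> J_minus (2 * m + 1)"
  shows "odd_square_poly m dvd eval_gamma 0 x"
proof -
  obtain a b c where x: "x = a * zeta_minus (2 * m + 1) + b * zeta_minus (2 * Suc m)
      + c * zeta_minus (2 * Suc m + 1)"
    using assms unfolding J_minus_def by auto
  define F :: "complex poly" where "F = [:0, 1:]^2 - of_nat (16 * (2 * m + 1)^2)"
  have "eval_gamma 0 (zeta_minus (2 * m + 1)) = [:0, 1:] * odd_square_poly m"
    "eval_gamma 0 (zeta_minus (2 * Suc m)) = F * odd_square_poly m"
    "eval_gamma 0 (zeta_minus (2 * Suc m + 1)) = [:0, 1:] * (F * odd_square_poly m)"
    using eval_gamma_0_zeta_minus[of m] eval_gamma_0_zeta_minus[of "Suc m"]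
    by (simp_all only: F_def odd_square_poly_Suc)
  then have "eval_gamma 0 x = (eval_gamma 0 a * [:0, 1:] + eval_gamma 0 b * F
      + eval_gamma 0 c * [:0, 1:] * F) * odd_square_poly m"
    unfolding x eval_gamma_add eval_gamma_mult by (simp only:) (simp add: algebra_simps)
  then show ?thesis by simp
qed

lemma eval_gamma_0_alpha_zeta_minus_diff:
  "eval_gamma 0 (var_alpha * zeta_minus (2 * m + 1) - zeta_minus (2 * m + 2))
     = of_nat (16 * (2 * m + 1)^2) * odd_square_poly m"
  using eval_gamma_0_zeta_minus[of m] eval_gamma_0_zeta_minus[of "Suc m"]
  by (simp add: odd_square_poly_Suc algebra_simps power2_eq_square)

text \<open>A truncated geometric series inverts 1 + \<gamma> w modulo \<gamma>^(2m) \<in> J_{2m+1}.\<close>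

lemma unit_mod_J_if_unit_mod_gamma:
  assumes "u * a - 1 - var_gamma * w \<in> J_minus (2 * m + 1)"
  shows "unit_mod_J (2 * m + 1) u"
proof -
  define t where "t = var_gamma * w"
  define S where "S = (\<Sum>i<2 * m. (- t)^i)"
  have geometric: "(1 + t) * S = 1 - var_gamma^(2 * m) * w^(2 * m)"
    using one_diff_power_eq[of "- t" "2 * m"] by (simp add: S_def t_def power_mult_distrib)
  have "u * (a * S) - 1 = (u * a - 1 - t) * S - var_gamma^(2 * m) * w^(2 * m)"
    using geometric by (simp add: algebra_simps)
  also have "\<dots> \<in> J_minus (2 * m + 1)"
    using J_minus_mult_right[OF assms, of S] J_minus_mult_right[OF gamma_power_in_J_minus]
    unfolding t_def by (rule J_minus_diff)
  finally show ?thesis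
    unfolding unit_mod_J_iff by blast
qed

lemma unit_mod_J_iff_coprime:
  "unit_mod_J (2 * m + 1) u \<longleftrightarrow> coprime (eval_gamma 0 u) (odd_square_poly m)"
proof
  assume "unit_mod_J (2 * m + 1) u"
  then obtain v where "u * v - 1 \<in> J_minus (2 * m + 1)"
    unfolding unit_mod_J_iff by blast
  then have inverse: "odd_square_poly m dvd eval_gamma 0 u * eval_gamma 0 v - 1"
    using odd_square_poly_dvd_eval_gamma_0 by fastforce
  show "coprime (eval_gamma 0 u) (odd_square_poly m)"
  proof (rule coprimeI)
    fix d assume "d dvd eval_gamma 0 u" and "d dvd odd_square_poly m"
    then have "d dvd eval_gamma 0 u * eval_gamma 0 v"
      and "d dvd eval_gamma 0 u * eval_gamma 0 v - 1"
      using inverse by (auto intro: dvd_mult2 dvd_trans[OF _ inverse])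
    from dvd_diff[OF this] show "is_unit d" by simp
  qed
next
  assume "coprime (eval_gamma 0 u) (odd_square_poly m)"
  then obtain x y where bezout: "x * eval_gamma 0 u + y * odd_square_poly m = 1"
    using bezout_coefficients_fst_snd[of "eval_gamma 0 u" "odd_square_poly m"] by auto
  define c :: complex where "c = of_nat (16 * (2 * m + 1)^2)"
  define e where "e = var_alpha * zeta_minus (2 * m + 1) - zeta_minus (2 * m + 2)"
  define A where "A = map_poly (\<lambda>a. [:a:]) x"
  define B where "B = map_poly (\<lambda>a. [:a:]) (smult (inverse c) y)"
  have "eval_gamma 0 e = smult c (odd_square_poly m)"
    unfolding e_def c_def eval_gamma_0_alpha_zeta_minus_diff by (simp add: of_nat_poly)
  moreover have "c \<noteq> 0"
    unfolding c_def by (simp only: of_nat_eq_0_iff) simp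
  ultimately have "eval_gamma 0 (u * A + B * e - 1) = 0"
    using bezout by (simp add: A_def B_def mult.commute)
  then obtain w where "u * A + B * e - 1 = var_gamma * w"
    using var_gamma_dvd_if_eval_gamma_0 by blast
  then have "u * A - 1 - var_gamma * w = (- B) * e"
    by (simp add: algebra_simps)
  also have "\<dots> \<in> J_minus (2 * m + 1)"
    using zeta_minus_in_J_minus(2)[of "2 * m + 1"] unfolding e_def
    by (intro J_minus_mult_left J_minus_diff zeta_minus_in_J_minus(1)) simp
  finally show "unit_mod_J (2 * m + 1) u"
    by (rule unit_mod_J_if_unit_mod_gamma)
qed

lemma poly_odd_square_poly_eq_0_iff_ev_point:
  "poly (odd_square_poly m) r = 0 \<longleftrightarrow>
     (\<exists>s \<in> {1, -1}. \<exists>j \<in> {1 .. m}. r = s * 4 * of_int (int (2 * m + 1) - 2 * int j))"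
proof -
  have point: "of_int (int (2 * m + 1) - 2 * int j) = (of_nat (2 * (m - j) + 1) :: complex)"
    if "j \<le> m" for j
    using that by (simp add: of_nat_diff)
  show ?thesis
  proof
    assume "poly (odd_square_poly m) r = 0"
    then obtain i where "i < m" and r: "r = of_nat (4 * (2 * i + 1)) \<or> r = - of_nat (4 * (2 * i + 1))"
      unfolding poly_odd_square_poly_eq_0_iff by blast
    define j where "j = m - i"
    define x :: complex where "x = of_int (int (2 * m + 1) - 2 * int j)"
    have j: "j \<in> {1 .. m}" and "x = of_nat (2 * i + 1)"
      using \<open>i < m\<close> point[of j] by (auto simp: j_def x_def)
    then have "r = 1 * 4 * x \<or> r = -1 * 4 * x"
      using r by simp
    then show "\<exists>s \<in> {1, -1}. \<exists>j \<in> {1 .. m}. r = s * 4 * of_int (int (2 * m + 1) - 2 * int j)"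
      using j unfolding x_def by blast
  next
    assume "\<exists>s \<in> {1, -1}. \<exists>j \<in> {1 .. m}. r = s * 4 * of_int (int (2 * m + 1) - 2 * int j)"
    then obtain s j where "s \<in> {1, -1}" "j \<in> {1 .. m}" "r = s * 4 * of_int (int (2 * m + 1) - 2 * int j)"
      by blast
    then show "poly (odd_square_poly m) r = 0"
      unfolding poly_odd_square_poly_eq_0_iff using point[of j]
      by (intro exI[of _ "m - j"]) auto
  qed
qed

theorem lemma5p3:
  fixes g :: nat and u :: bipoly
  assumes "g \<ge> 1" and "odd g"
  shows "unit_mod_J g u \<longleftrightarrow>
           (\<forall>s \<in> {1, -1}. \<forall>j \<in> {1 .. (g - 1) div 2}. ev g s j u \<noteq> 0)"
proof -
  obtain m where g: "g = 2 * m + 1"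
    using \<open>odd g\<close> by (blast elim: oddE)
  have "unit_mod_J g u \<longleftrightarrow> (\<forall>r. poly (odd_square_poly m) r = 0 \<longrightarrow> poly (eval_gamma 0 u) r \<noteq> 0)"
    unfolding g unit_mod_J_iff_coprime coprime_commute[of "eval_gamma 0 u"]
    by (rule coprime_iff_no_common_root)
  also have "\<dots> \<longleftrightarrow> (\<forall>s \<in> {1, -1}. \<forall>j \<in> {1 .. m}.
      poly (eval_gamma 0 u) (s * 4 * of_int (int g - 2 * int j)) \<noteq> 0)"
    unfolding poly_odd_square_poly_eq_0_iff_ev_point g by blast
  finally show ?thesis
    by (simp add: g ev_def poly_eval_gamma)
qed

end
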